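(* Let $n_1<n_2<n_3$ be positive integers with $\gcd(n_1,n_2,n_3)=1$ minimally generating a numerical semigroup $S=\langle n_1,n_2,n_3\rangle$ that is not symmetric. Then $c_1>r_{12}+r_{13}$ and $c_3<r_{31}+r_{32}$.
   Context: $S=\{x_1n_1+x_2n_2+x_3n_3 : x_i\in\mathbb N\}$; minimally generated means no $n_i$ lies in the submonoid generated by the other two. With $F=\max(\mathbb Z\setminus S)$, $S$ is symmetric if $x\in\mathbb Z\setminus S$ implies $F-x\in S$. For $\{i,j,k\}=\{1,2,3\}$, $c_i=\min\{c\in\mathbb Z^+ : cn_i\in\langle n_j,n_k\rangle\}$, and $r_{ij},r_{ik}$ are the (for nonsymmetric $S$ unique, positive) integers with $c_in_i=r_{ij}n_j+r_{ik}n_k$. *)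

theory Defs
  imports Main
begin

definition sgen3 :: "nat \<Rightarrow> nat \<Rightarrow> nat \<Rightarrow> nat set" where
  "sgen3 a b c = {x1 * a + x2 * b + x3 * c | x1 x2 x3. True}"

definition sgen2 :: "nat \<Rightarrow> nat \<Rightarrow> nat set" where
  "sgen2 a b = {x1 * a + x2 * b | x1 x2. True}"

definition minimally_generated3 :: "nat \<Rightarrow> nat \<Rightarrow> nat \<Rightarrow> bool" where
  "minimally_generated3 a b c \<longleftrightarrow>
     a \<notin> sgen2 b c \<and> b \<notin> sgen2 a c \<and> c \<notin> sgen2 a b"

definition frob :: "nat set \<Rightarrow> int" where
  "frob S = (GREATEST x::int. x \<notin> int ` S)"

definition symmetric_sg :: "nat set \<Rightarrow> bool" where
  "symmetric_sg S \<longleftrightarrow> (\<forall>x::int. x \<notin> int ` S \<longrightarrow> frob S - x \<in> int ` S)"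

definition cmin :: "nat \<Rightarrow> nat \<Rightarrow> nat \<Rightarrow> nat" where
  "cmin ni nj nk = (LEAST c::nat. 0 < c \<and> c * ni \<in> sgen2 nj nk)"

end

theory Submission
  imports Defs
begin

text \<open>Writing \<open>c n\<^sub>1\<close> as a combination of the larger generators \<open>n\<^sub>2, n\<^sub>3\<close> needs fewer
  summands than \<open>c\<close>, and writing \<open>c n\<^sub>3\<close> as a combination of the smaller generators
  \<open>n\<^sub>1, n\<^sub>2\<close> needs more.\<close>

lemma weighted_sum_gt_of_less:
  fixes a b d x y :: nat
  assumes "a < b" "a < d" "0 < x + y"
  shows "(x + y) * a < x * b + y * d"
proof (cases "0 < x")
  case True
  have "x * a < x * b" "y * a \<le> y * d" using True assms by simp_all
  then show ?thesis by (simp add: distrib_right add_less_le_mono)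
next
  case False
  have "x * a \<le> x * b" "y * a < y * d" using False assms by simp_all
  then show ?thesis by (simp add: distrib_right add_le_less_mono)
qed

lemma weighted_sum_less_of_greater:
  fixes a b d x y :: nat
  assumes "b < a" "d < a" "0 < x + y"
  shows "x * b + y * d < (x + y) * a"
proof (cases "0 < x")
  case True
  have "x * b < x * a" "y * d \<le> y * a" using True assms by simp_all
  then show ?thesis by (simp add: distrib_right add_less_le_mono)
next
  case False
  have "x * b \<le> x * a" "y * d < y * a" using False assms by simp_all
  then show ?thesis by (simp add: distrib_right add_le_less_mono)
qed

lemma coeff_sum_less_if_smallest:
  fixes a b d c x y :: nat
  assumes "0 < c" "0 < a" "a < b" "a < d" and eq: "c * a = x * b + y * d"
  shows "x + y < c"
proof -
  have "0 < x + y" using assms by (cases "x + y") auto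
  then have "(x + y) * a < c * a" using eq weighted_sum_gt_of_less assms by simp
  then show ?thesis by simp
qed

lemma coeff_sum_greater_if_largest:
  fixes a b d c x y :: nat
  assumes "0 < c" "b < a" "d < a" and eq: "c * a = x * b + y * d"
  shows "c < x + y"
proof -
  have "0 < x + y" using assms by (cases "x + y") auto
  then have "c * a < (x + y) * a" using eq weighted_sum_less_of_greater assms by simp
  then show ?thesis by simp
qed

lemma cmin_pos:
  assumes "0 < nj"
  shows "0 < cmin ni nj nk"
proof -
  have "nj * ni = ni * nj + 0 * nk" by simp
  then have "nj * ni \<in> sgen2 nj nk" unfolding sgen2_def by blast
  then have "\<exists>c. 0 < c \<and> c * ni \<in> sgen2 nj nk" using assms by blast
  from LeastI_ex[OF this] show ?thesis unfolding cmin_def by blast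
qed

theorem lemma1p3:
  fixes n1 n2 n3 :: nat
  assumes "0 < n1" "n1 < n2" "n2 < n3"
    and "gcd n1 (gcd n2 n3) = 1"
    and "minimally_generated3 n1 n2 n3"
    and "\<not> symmetric_sg (sgen3 n1 n2 n3)"
  shows "(\<forall>r12 r13 :: nat. cmin n1 n2 n3 * n1 = r12 * n2 + r13 * n3
            \<longrightarrow> cmin n1 n2 n3 > r12 + r13)
       \<and> (\<forall>r31 r32 :: nat. cmin n3 n1 n2 * n3 = r31 * n1 + r32 * n2
            \<longrightarrow> cmin n3 n1 n2 < r31 + r32)"
proof (intro conjI allI impI)
  fix r12 r13 :: nat
  assume "cmin n1 n2 n3 * n1 = r12 * n2 + r13 * n3"
  moreover have "0 < cmin n1 n2 n3" using assms(1,2) by (simp add: cmin_pos)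
  ultimately show "r12 + r13 < cmin n1 n2 n3"
    using assms(1-3) by (intro coeff_sum_less_if_smallest) simp_all
next
  fix r31 r32 :: nat
  assume "cmin n3 n1 n2 * n3 = r31 * n1 + r32 * n2"
  moreover have "0 < cmin n3 n1 n2" using assms(1) by (simp add: cmin_pos)
  ultimately show "cmin n3 n1 n2 < r31 + r32"
    using assms(1-3) by (intro coeff_sum_greater_if_largest) simp_all
qed

end
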